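(* Let $d\ge 1$ and $L\ge 2$, and let $|\phi_{\mathrm{w},d}(\theta)\rangle$ be the $d$-dimensional Ising whip state defined in the context. Then, with $\theta_d=\pi/(2d)$, $$|\phi_{\mathrm{w},d}(-\theta_d)\rangle=\tfrac{1}{\sqrt2}\big(|0\rangle^{\otimes L^d}+|1\rangle^{\otimes L^d}\big),\qquad |\phi_{\mathrm{w},d}(\theta_d)\rangle=\tfrac{1}{\sqrt2}\big(|s\rangle+|\bar s\rangle\big),$$ where $|s\rangle$ is the computational basis state with bit $s_x=(x_1+\dots+x_d)\bmod 2$ at site $x$ and $|\bar s\rangle$ is its bitwise complement. Consequently these are ground states of $H_J=J\sum_{\langle i,j\rangle}Z_iZ_j$ (sum over nearest-neighbour pairs of the lattice) for $J=-1$ and $J=+1$ respectively, with energy $-d(L-1)L^{d-1}$.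
   Context: Lattice $\Lambda=\{0,\dots,L-1\}^d$ with one qubit per site, $N=L^d$. Directed edges $x\to x+e_k$ ($e_k$ the $k$-th unit vector) whenever both endpoints lie in $\Lambda$. For a site $v$, $\deg^-(v)$ is the number of incoming edges. For each edge $u\to v$ define the gate $G_{u\to v}(\theta)=\exp\!\big(-\mathrm{i}\,\tfrac{d}{\deg^-(v)}\,\theta\, Z_uY_v/2\big)$, where $X,Y,Z$ are Pauli matrices. The whip state is $|\phi_{\mathrm{w},d}(\theta)\rangle=\prod G_{u\to v}(\theta)\,|+\rangle^{\otimes N}$, where $|+\rangle=(|0\rangle+|1\rangle)/\sqrt2$ and the gates are applied in order of increasing layer index $\sum_k v_k$ of the target $v$ (gates whose targets lie in the same layer commute, so their relative order is irrelevant). *)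

theory Defs
  imports Complex_Main
begin

definition site :: "nat \<Rightarrow> nat \<Rightarrow> nat list \<Rightarrow> bool" where
  "site L d x \<longleftrightarrow> length x = d \<and> (\<forall>i<d. x ! i < L)"

definition edges :: "nat \<Rightarrow> nat \<Rightarrow> (nat list \<times> nat list) set" where
  "edges L d = {(x, x[k := Suc (x ! k)]) | x k. site L d x \<and> k < d \<and> Suc (x ! k) < L}"

definition indeg :: "nat \<Rightarrow> nat \<Rightarrow> nat list \<Rightarrow> nat" where
  "indeg L d v = card {u. (u, v) \<in> edges L d}"

definition layer :: "nat list \<Rightarrow> nat" where
  "layer x = sum_list x"

text \<open>Pure states of the qubits: amplitude functions on classical configurations
  (a configuration is a predicate on sites; bit 1 = True).\<close>
type_synonym qstate = "(nat list \<Rightarrow> bool) \<Rightarrow> complex"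

definition config :: "nat \<Rightarrow> nat \<Rightarrow> (nat list \<Rightarrow> bool) \<Rightarrow> bool" where
  "config L d \<sigma> \<longleftrightarrow> (\<forall>x. \<sigma> x \<longrightarrow> site L d x)"

definition supported :: "nat \<Rightarrow> nat \<Rightarrow> qstate \<Rightarrow> bool" where
  "supported L d \<psi> \<longleftrightarrow> (\<forall>\<sigma>. \<psi> \<sigma> \<noteq> 0 \<longrightarrow> config L d \<sigma>)"

definition flip :: "nat list \<Rightarrow> (nat list \<Rightarrow> bool) \<Rightarrow> (nat list \<Rightarrow> bool)" where
  "flip v \<sigma> = \<sigma>(v := \<not> \<sigma> v)"

definition pauliZ :: "nat list \<Rightarrow> qstate \<Rightarrow> qstate" where
  "pauliZ u \<psi> = (\<lambda>\<sigma>. (if \<sigma> u then -1 else 1) * \<psi> \<sigma>)"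

text \<open>Pauli Y on qubit v (Y|0> = i|1>, Y|1> = -i|0>).\<close>
definition pauliY :: "nat list \<Rightarrow> qstate \<Rightarrow> qstate" where
  "pauliY v \<psi> = (\<lambda>\<sigma>. (if \<sigma> v then \<i> else - \<i>) * \<psi> (flip v \<sigma>))"

text \<open>G_{u->v}(theta) = exp(-i a Z_u Y_v / 2) with a = d/deg^-(v) * theta.
  Since (Z_u Y_v)^2 = 1, this exponential equals cos(a/2) I - i sin(a/2) Z_u Y_v.\<close>
definition gate :: "nat \<Rightarrow> nat \<Rightarrow> real \<Rightarrow> nat list \<times> nat list \<Rightarrow> qstate \<Rightarrow> qstate" where
  "gate L d \<theta> e \<psi> =
     (let u = fst e; v = snd e; a = real d / real (indeg L d v) * \<theta>
      in (\<lambda>\<sigma>. complex_of_real (cos (a / 2)) * \<psi> \<sigma>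
               - \<i> * complex_of_real (sin (a / 2)) * pauliZ u (pauliY v \<psi>) \<sigma>))"

definition plus_state :: "nat \<Rightarrow> nat \<Rightarrow> qstate" where
  "plus_state L d = (\<lambda>\<sigma>. if config L d \<sigma> then complex_of_real ((1 / sqrt 2) ^ (L ^ d)) else 0)"

definition gate_order :: "nat \<Rightarrow> nat \<Rightarrow> (nat list \<times> nat list) list \<Rightarrow> bool" where
  "gate_order L d es \<longleftrightarrow> distinct es \<and> set es = edges L d \<and> sorted (map (\<lambda>e. layer (snd e)) es)"

definition whip :: "nat \<Rightarrow> nat \<Rightarrow> (nat list \<times> nat list) list \<Rightarrow> real \<Rightarrow> qstate" where
  "whip L d es \<theta> = fold (gate L d \<theta>) es (plus_state L d)"

definition ket :: "(nat list \<Rightarrow> bool) \<Rightarrow> qstate" where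
  "ket \<sigma> = (\<lambda>\<tau>. if \<tau> = \<sigma> then 1 else 0)"

definition all0 :: "nat list \<Rightarrow> bool" where "all0 = (\<lambda>x. False)"
definition all1 :: "nat \<Rightarrow> nat \<Rightarrow> nat list \<Rightarrow> bool" where "all1 L d = (\<lambda>x. site L d x)"
definition stag :: "nat \<Rightarrow> nat \<Rightarrow> nat list \<Rightarrow> bool" where
  "stag L d = (\<lambda>x. site L d x \<and> sum_list x mod 2 = 1)"
definition stag_bar :: "nat \<Rightarrow> nat \<Rightarrow> nat list \<Rightarrow> bool" where
  "stag_bar L d = (\<lambda>x. site L d x \<and> sum_list x mod 2 = 0)"

definition superpos :: "qstate \<Rightarrow> qstate \<Rightarrow> qstate" where
  "superpos \<phi> \<psi> = (\<lambda>\<sigma>. complex_of_real (1 / sqrt 2) * (\<phi> \<sigma> + \<psi> \<sigma>))"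

text \<open>H_J = J \<Sum>_{<i,j>} Z_i Z_j over nearest-neighbour pairs (each pair = one edge).\<close>
definition ham :: "nat \<Rightarrow> nat \<Rightarrow> real \<Rightarrow> qstate \<Rightarrow> qstate" where
  "ham L d J \<psi> = (\<lambda>\<sigma>. \<Sum>e\<in>edges L d. complex_of_real J * pauliZ (fst e) (pauliZ (snd e) \<psi>) \<sigma>)"

definition eigenvalue :: "nat \<Rightarrow> nat \<Rightarrow> real \<Rightarrow> real \<Rightarrow> bool" where
  "eigenvalue L d J E \<longleftrightarrow> (\<exists>\<psi>. supported L d \<psi> \<and> \<psi> \<noteq> (\<lambda>_. 0)
        \<and> ham L d J \<psi> = (\<lambda>\<sigma>. complex_of_real E * \<psi> \<sigma>))"

definition ground_state :: "nat \<Rightarrow> nat \<Rightarrow> real \<Rightarrow> qstate \<Rightarrow> real \<Rightarrow> bool" where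
  "ground_state L d J \<psi> E \<longleftrightarrow> supported L d \<psi> \<and> \<psi> \<noteq> (\<lambda>_. 0)
        \<and> ham L d J \<psi> = (\<lambda>\<sigma>. complex_of_real E * \<psi> \<sigma>)
        \<and> (\<forall>E'. eigenvalue L d J E' \<longrightarrow> E \<le> E')"

end

theory Submission
  imports Defs "HOL-Library.FuncSet"
begin

(* In the branch where the origin (the only site without incoming edges) holds the bit b, the
   state stays a product state whose qubit x is cos (beta x b) |0> + sin (beta x b) |1>, starting
   from beta = pi/4.  Layers increase along edges, so when the gate u -> v acts, all deg^-(u) gates
   into u have already acted, each rotating u by the same signed amount d theta / (2 deg^-(u)); the
   angle of u is then pi/4 +- d theta/2, which is 0 or pi/2 for theta = +-pi/(2d).  So u is a
   classical bit in each branch, Z_u is a sign, and the gate rotates v alone.  In the end every qubit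
   is classical: equal to b for theta = -pi/(2d), and to b xor the parity of its layer for
   theta = pi/(2d).  Both configurations minimise every bond of the diagonal Hamiltonian H_J, for
   J = -1 and J = 1 respectively, hence span ground states. *)

lemma card_lists_nth_less:
  "card {xs :: nat list. length xs = n \<and> (\<forall>i<n. xs ! i < f i)} = (\<Prod>i<n. f i)"
proof -
  let ?X = "{xs :: nat list. length xs = n \<and> (\<forall>i<n. xs ! i < f i)}"
  have "bij_betw (\<lambda>xs. restrict (nth xs) {..<n}) ?X (\<Pi>\<^sub>E i\<in>{..<n}. {..<f i})"
  proof (rule bij_betwI')
    fix xs ys assume "xs \<in> ?X" "ys \<in> ?X"
    moreover have "xs ! i = ys ! i"
      if "restrict (nth xs) {..<n} = restrict (nth ys) {..<n}" "i < n" for i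
      using fun_cong[OF that(1), of i] that(2) by simp
    ultimately show "restrict (nth xs) {..<n} = restrict (nth ys) {..<n} \<longleftrightarrow> xs = ys"
      by (auto intro: nth_equalityI)
  next
    fix xs assume "xs \<in> ?X"
    then show "restrict (nth xs) {..<n} \<in> (\<Pi>\<^sub>E i\<in>{..<n}. {..<f i})"
      by auto
  next
    fix g assume "g \<in> (\<Pi>\<^sub>E i\<in>{..<n}. {..<f i})"
    then show "\<exists>xs\<in>?X. g = restrict (nth xs) {..<n}"
      by (intro bexI[of _ "map g [0..<n]"]) (auto simp: PiE_iff extensional_def)
  qed
  then show ?thesis
    by (simp add: bij_betw_same_card card_PiE)
qed

lemma finite_sites: "finite {x. site L d x}"
proof -
  have "{x. site L d x} \<subseteq> {xs. set xs \<subseteq> {..<L} \<and> length xs = d}"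
    by (auto simp: site_def in_set_conv_nth)
  then show ?thesis
    using finite_lists_length_eq[of "{..<L}" d] finite_subset by blast
qed

lemma card_sites: "card {x. site L d x} = L ^ d"
  using card_lists_nth_less[of d "\<lambda>_. L"] by (simp add: site_def)

definition origin :: "nat \<Rightarrow> nat list" where
  "origin d = replicate d 0"

lemma site_origin: "0 < L \<Longrightarrow> site L d (origin d)"
  by (simp add: site_def origin_def)

lemma layer_origin [simp]: "layer (origin d) = 0"
  by (simp add: layer_def origin_def sum_list_replicate)

lemma layer_list_update_Suc: "k < length x \<Longrightarrow> layer (x[k := Suc (x ! k)]) = Suc (layer x)"
  by (induction x arbitrary: k) (auto simp: layer_def split: nat.split)

lemma
  assumes "(u, v) \<in> edges L d"
  shows edge_source_site: "site L d u"
    and edge_target_site: "site L d v"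
    and layer_edge_target: "layer v = Suc (layer u)"
  using assms by (auto simp: edges_def site_def nth_list_update layer_list_update_Suc)

lemma edge_target_ne_origin: "(u, v) \<in> edges L d \<Longrightarrow> v \<noteq> origin d"
  using layer_edge_target by fastforce

lemma edge_source_ne_target: "(u, v) \<in> edges L d \<Longrightarrow> u \<noteq> v"
  using layer_edge_target by fastforce

lemma finite_edges: "finite (edges L d)"
proof -
  have "edges L d \<subseteq> {x. site L d x} \<times> {x. site L d x}"
    using edge_source_site edge_target_site by auto
  then show ?thesis
    using finite_sites finite_subset by blast
qed

lemma exists_edge_into_site:
  assumes "site L d v" "v \<noteq> origin d"
  shows "\<exists>u. (u, v) \<in> edges L d"
proof -
  obtain k where k: "k < d" "v ! k \<noteq> 0"
    using assms nth_equalityI[of v "origin d"] by (force simp: site_def origin_def)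
  define u where "u = v[k := v ! k - 1]"
  have "site L d u" "v = u[k := Suc (u ! k)]" "Suc (u ! k) < L"
    using assms(1) k by (auto simp: site_def u_def nth_list_update)
  then show ?thesis
    using k(1) unfolding edges_def by blast
qed

lemma indeg_eq_card_edges_into: "indeg L d v = card {e \<in> edges L d. snd e = v}"
proof -
  have "{e \<in> edges L d. snd e = v} = (\<lambda>u. (u, v)) ` {u. (u, v) \<in> edges L d}"
    by auto
  then show ?thesis
    by (simp add: indeg_def card_image inj_on_def)
qed

lemma indeg_pos:
  assumes "site L d v" "v \<noteq> origin d"
  shows "0 < indeg L d v"
  using exists_edge_into_site[OF assms] finite_edges[of L d]
  by (auto simp: indeg_eq_card_edges_into card_gt_0_iff)

(* An edge is a direction k together with a site that is not on the face x ! k = L - 1. *)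
lemma card_edges: "card (edges L d) = d * ((L - 1) * L ^ (d - 1))"
proof -
  define D where "D = (SIGMA k:{..<d}. {x. site L d x \<and> Suc (x ! k) < L})"
  define step where "step = (\<lambda>(k, x). (x, x[k := Suc (x ! k)]))"
  have edges_eq: "edges L d = step ` D"
    by (auto simp: edges_def D_def step_def image_iff)
  have "inj_on step D"
    by (rule inj_onI) (auto simp: D_def step_def site_def, metis n_not_Suc_n nth_list_update)
  have slice: "card {x. site L d x \<and> Suc (x ! k) < L} = (L - 1) * L ^ (d - 1)" if "k < d" for k
  proof -
    have "(\<forall>i<d. x ! i < (if i = k then L - 1 else L)) \<longleftrightarrow> (\<forall>i<d. x ! i < L) \<and> Suc (x ! k) < L"
      for x :: "nat list"
    proof
      assume bound: "\<forall>i<d. x ! i < (if i = k then L - 1 else L)"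
      then have "x ! i < L" if "i < d" for i
        using that by (force split: if_splits)
      moreover have "Suc (x ! k) < L"
        using bound \<open>k < d\<close> by auto
      ultimately show "(\<forall>i<d. x ! i < L) \<and> Suc (x ! k) < L"
        by blast
    qed auto
    then have "{x. site L d x \<and> Suc (x ! k) < L}
        = {xs. length xs = d \<and> (\<forall>i<d. xs ! i < (if i = k then L - 1 else L))}"
      by (auto simp: site_def)
    moreover have "card ({..<d} \<inter> - {k}) = d - 1"
      using that by (simp add: Diff_eq[symmetric])
    ultimately show ?thesis
      using that by (simp add: card_lists_nth_less prod.If_cases Int_absorb1)
  qed
  have "card D = (\<Sum>k<d. (L - 1) * L ^ (d - 1))"
    unfolding D_def using finite_sites[of L d]
    by (subst card_SigmaI) (auto intro: finite_subset sum.cong simp: slice)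
  then show ?thesis
    using edges_eq \<open>inj_on step D\<close> by (simp add: card_image)
qed

definition zsign :: "bool \<Rightarrow> real" where
  "zsign t = (if t then -1 else 1)"

definition qubit_amp :: "real \<Rightarrow> bool \<Rightarrow> real" where
  "qubit_amp \<beta> t = (if t then sin \<beta> else cos \<beta>)"

lemma qubit_amp_pi_quarter [simp]: "qubit_amp (pi / 4) t = 1 / sqrt 2"
  by (simp add: qubit_amp_def sin_45 cos_45 real_div_sqrt)

lemma qubit_amp_basis: "qubit_amp (if c then pi / 2 else 0) t = of_bool (t = c)"
  by (simp add: qubit_amp_def)

lemma qubit_amp_rotate:
  "qubit_amp (\<beta> + zsign z * a) t = cos a * qubit_amp \<beta> t - zsign z * zsign t * sin a * qubit_amp \<beta> (\<not> t)"
  by (cases z; cases t) (simp_all add: qubit_amp_def zsign_def sin_add cos_add sin_diff cos_diff algebra_simps)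

lemma gate_apply:
  "gate L d \<theta> (u, v) \<psi> \<sigma> =
     of_real (cos (real d / real (indeg L d v) * \<theta> / 2)) * \<psi> \<sigma>
     - of_real (zsign (\<sigma> u) * zsign (\<sigma> v) * sin (real d / real (indeg L d v) * \<theta> / 2)) * \<psi> (flip v \<sigma>)"
  by (cases "\<sigma> u"; cases "\<sigma> v") (simp_all add: gate_def pauliZ_def pauliY_def zsign_def Let_def algebra_simps)

definition cond_product :: "nat \<Rightarrow> nat \<Rightarrow> (nat list \<Rightarrow> bool \<Rightarrow> real) \<Rightarrow> qstate" where
  "cond_product L d \<beta> = (\<lambda>\<sigma>. if config L d \<sigma>
     then of_real (\<Prod>x\<in>{x. site L d x}. qubit_amp (\<beta> x (\<sigma> (origin d))) (\<sigma> x)) else 0)"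

lemma plus_state_eq_cond_product: "plus_state L d = cond_product L d (\<lambda>_ _. pi / 4)"
  by (auto simp: plus_state_def cond_product_def card_sites)

lemma cond_product_factor_site:
  assumes "config L d \<sigma>" "site L d v"
  shows "cond_product L d \<beta> \<sigma> = of_real (qubit_amp (\<beta> v (\<sigma> (origin d))) (\<sigma> v)
           * (\<Prod>x\<in>{x. site L d x} - {v}. qubit_amp (\<beta> x (\<sigma> (origin d))) (\<sigma> x)))"
  using assms finite_sites by (simp add: cond_product_def prod.remove)

lemma config_flip: "site L d v \<Longrightarrow> config L d (flip v \<sigma>) \<longleftrightarrow> config L d \<sigma>"
  by (auto simp: config_def flip_def)

lemma cond_product_flip:
  assumes "config L d \<sigma>" "site L d v" "v \<noteq> origin d"
  shows "cond_product L d \<beta> (flip v \<sigma>) = of_real (qubit_amp (\<beta> v (\<sigma> (origin d))) (\<not> \<sigma> v)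
           * (\<Prod>x\<in>{x. site L d x} - {v}. qubit_amp (\<beta> x (\<sigma> (origin d))) (\<sigma> x)))"
proof -
  have "(\<Prod>x\<in>{x. site L d x} - {v}. qubit_amp (\<beta> x (\<sigma> (origin d))) (flip v \<sigma> x))
      = (\<Prod>x\<in>{x. site L d x} - {v}. qubit_amp (\<beta> x (\<sigma> (origin d))) (\<sigma> x))"
    by (rule prod.cong) (auto simp: flip_def)
  moreover have "flip v \<sigma> (origin d) = \<sigma> (origin d)" "flip v \<sigma> v = (\<not> \<sigma> v)"
    using assms(3) by (simp_all add: flip_def)
  ultimately show ?thesis
    using assms(1,2) by (simp only: cond_product_factor_site config_flip)
qed

lemma cond_product_fun_upd:
  assumes "config L d \<sigma>" "site L d v"
  shows "cond_product L d (\<beta>(v := \<gamma>)) \<sigma> = of_real (qubit_amp (\<gamma> (\<sigma> (origin d))) (\<sigma> v)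
           * (\<Prod>x\<in>{x. site L d x} - {v}. qubit_amp (\<beta> x (\<sigma> (origin d))) (\<sigma> x)))"
proof -
  have "(\<Prod>x\<in>{x. site L d x} - {v}. qubit_amp ((\<beta>(v := \<gamma>)) x (\<sigma> (origin d))) (\<sigma> x))
      = (\<Prod>x\<in>{x. site L d x} - {v}. qubit_amp (\<beta> x (\<sigma> (origin d))) (\<sigma> x))"
    by (rule prod.cong) auto
  then show ?thesis
    using assms by (simp only: cond_product_factor_site fun_upd_same)
qed

(* Once qubit u is the classical bit c b in the branch where the origin holds b, Z_u acts
   as the sign zsign (c b), and the gate u -> v is a rotation of qubit v alone. *)
lemma gate_cond_product:
  assumes u: "site L d u" and v: "site L d v" "v \<noteq> origin d" and "u \<noteq> v"
    and classical: "\<And>\<sigma>. config L d \<sigma> \<Longrightarrow> qubit_amp (\<beta> u (\<sigma> (origin d))) (\<sigma> u) \<noteq> 0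
                      \<Longrightarrow> \<sigma> u = c (\<sigma> (origin d))"
  shows "gate L d \<theta> (u, v) (cond_product L d \<beta>)
       = cond_product L d (\<beta>(v := \<lambda>b. \<beta> v b + zsign (c b) * (real d / real (indeg L d v) * \<theta> / 2)))"
proof
  fix \<sigma> :: "nat list \<Rightarrow> bool"
  define a where "a = real d / real (indeg L d v) * \<theta> / 2"
  define b where "b = \<sigma> (origin d)"
  define P where "P = (\<Prod>x\<in>{x. site L d x} - {v}. qubit_amp (\<beta> x b) (\<sigma> x))"
  show "gate L d \<theta> (u, v) (cond_product L d \<beta>) \<sigma>
      = cond_product L d (\<beta>(v := \<lambda>b. \<beta> v b + zsign (c b) * a)) \<sigma>"
  proof (cases "config L d \<sigma>")
    case False
    then show ?thesis
      using v by (simp add: gate_apply cond_product_def config_flip)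
  next
    case True
    have "\<sigma> u = c b \<or> P = 0"
    proof (rule disjCI)
      assume "P \<noteq> 0"
      then have "qubit_amp (\<beta> u b) (\<sigma> u) \<noteq> 0"
        using u \<open>u \<noteq> v\<close> finite_sites by (auto simp: P_def prod_zero_iff)
      then show "\<sigma> u = c b"
        using classical[OF True] by (simp add: b_def)
    qed
    then show ?thesis
      unfolding cond_product_fun_upd[OF True v(1)] b_def[symmetric] P_def[symmetric] qubit_amp_rotate
      unfolding gate_apply a_def[symmetric] cond_product_factor_site[OF True v(1)]
        cond_product_flip[OF True v] b_def[symmetric] P_def[symmetric]
      by (elim disjE) (simp_all add: algebra_simps)
  qed
qed

lemma prod_of_bool: "finite A \<Longrightarrow> (\<Prod>x\<in>A. of_bool (P x)) = (of_bool (\<forall>x\<in>A. P x) :: 'a :: comm_semiring_1)"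
  by (induction A rule: finite_induct) auto

lemma superpos_ket_distinct:
  "A \<noteq> B \<Longrightarrow> superpos (ket A) (ket B) = (\<lambda>\<sigma>. if \<sigma> = A \<or> \<sigma> = B then of_real (1 / sqrt 2) else 0)"
  by (auto simp: superpos_def ket_def)

lemma gate_order_incoming_before:
  assumes order: "gate_order L d es" and "n < length es" "es ! n = (u, v)"
  shows "{e \<in> set (take n es). snd e = u} = {e \<in> edges L d. snd e = u}"
proof (intro equalityI subsetI)
  fix e assume "e \<in> {e \<in> set (take n es). snd e = u}"
  then show "e \<in> {e \<in> edges L d. snd e = u}"
    using order by (auto simp: gate_order_def dest: in_set_takeD)
next
  fix e assume e: "e \<in> {e \<in> edges L d. snd e = u}"
  then have "e \<in> set es"
    using order by (simp add: gate_order_def)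
  then obtain j where j: "j < length es" "es ! j = e"
    by (meson in_set_conv_nth)
  have "(u, v) \<in> edges L d"
    using order assms(2,3) nth_mem by (fastforce simp: gate_order_def)
  then have "layer (snd (es ! j)) < layer (snd (es ! n))"
    using e j assms(3) layer_edge_target by auto
  then have "j < n"
    using order j assms(2) sorted_nth_mono[of "map (\<lambda>e. layer (snd e)) es" n j]
    by (fastforce simp: gate_order_def)
  then show "e \<in> {e \<in> set (take n es). snd e = u}"
    using e j by (auto simp: in_set_conv_nth intro!: exI[of _ j])
qed

definition whip_angle ::
    "nat \<Rightarrow> nat \<Rightarrow> real \<Rightarrow> (nat list \<Rightarrow> bool \<Rightarrow> real) \<Rightarrow> (nat list \<times> nat list) list
      \<Rightarrow> nat list \<Rightarrow> bool \<Rightarrow> real" where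
  "whip_angle L d \<theta> sg ps x b =
     pi / 4 + real (card {e \<in> set ps. snd e = x}) * (sg x b * (real d / real (indeg L d x) * \<theta> / 2))"

lemma whip_angle_snoc:
  assumes "(u, v) \<notin> set ps"
  shows "whip_angle L d \<theta> sg (ps @ [(u, v)]) = (whip_angle L d \<theta> sg ps)(v :=
           \<lambda>b. whip_angle L d \<theta> sg ps v b + sg v b * (real d / real (indeg L d v) * \<theta> / 2))"
    (is "_ = ?rhs")
proof (intro ext)
  fix x b
  have "{e \<in> set (ps @ [(u, v)]). snd e = x}
      = (if x = v then insert (u, v) {e \<in> set ps. snd e = x} else {e \<in> set ps. snd e = x})"
    by auto
  then show "whip_angle L d \<theta> sg (ps @ [(u, v)]) x b = ?rhs x b"
    using assms by (simp add: whip_angle_def algebra_simps add_divide_distrib)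
qed

lemma whip_angle_all_incoming:
  assumes "{e \<in> set ps. snd e = x} = {e \<in> edges L d. snd e = x}" "site L d x" "x \<noteq> origin d"
  shows "whip_angle L d \<theta> sg ps x b = pi / 4 + sg x b * (real d * \<theta> / 2)"
  using assms indeg_pos[OF assms(2,3)] by (simp add: whip_angle_def indeg_eq_card_edges_into)

lemma branch_configs_distinct:
  assumes "0 < L" "\<And>b. g (origin d) b = b"
  shows "(\<lambda>x. site L d x \<and> g x False) \<noteq> (\<lambda>x. site L d x \<and> g x True)"
proof
  assume "(\<lambda>x. site L d x \<and> g x False) = (\<lambda>x. site L d x \<and> g x True)"
  from fun_cong[OF this, of "origin d"] show False
    using assms site_origin[OF assms(1)] by simp
qed

lemma config_determined_by_origin_iff:
  assumes "0 < L" and g_origin: "\<And>b. g (origin d) b = b"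
  shows "config L d \<sigma> \<and> (\<forall>x\<in>{x. site L d x} - {origin d}. \<sigma> x = g x (\<sigma> (origin d)))
     \<longleftrightarrow> \<sigma> = (\<lambda>x. site L d x \<and> g x False) \<or> \<sigma> = (\<lambda>x. site L d x \<and> g x True)"
    (is "?classical \<longleftrightarrow> \<sigma> = ?cfg False \<or> \<sigma> = ?cfg True")
proof
  assume classical: ?classical
  have "\<sigma> x = ?cfg (\<sigma> (origin d)) x" for x
  proof (cases "site L d x")
    case True
    then show ?thesis
      using classical g_origin by (cases "x = origin d") simp_all
  next
    case False
    then show ?thesis
      using classical unfolding config_def by blast
  qed
  then have "\<sigma> = ?cfg (\<sigma> (origin d))" ..
  then show "\<sigma> = ?cfg False \<or> \<sigma> = ?cfg True"
    by (cases "\<sigma> (origin d)") simp_all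
next
  assume "\<sigma> = ?cfg False \<or> \<sigma> = ?cfg True"
  then obtain c where \<sigma>: "\<sigma> = ?cfg c"
    by blast
  then have "\<sigma> (origin d) = c"
    using site_origin[OF assms(1)] g_origin by simp
  with \<sigma> show ?classical
    by (simp add: config_def)
qed

(* g x b is the bit site x ends up holding in the branch where the origin holds b, and sg v b is
   the eigenvalue of Z shared by all sources of v in that branch. *)
context
  fixes L d :: nat and es :: "(nat list \<times> nat list) list" and \<theta> :: real
    and g :: "nat list \<Rightarrow> bool \<Rightarrow> bool" and sg :: "nat list \<Rightarrow> bool \<Rightarrow> real"
  assumes order: "gate_order L d es"
    and g_origin: "\<And>b. g (origin d) b = b"
    and source_sign: "\<And>u v b. (u, v) \<in> edges L d \<Longrightarrow> zsign (g u b) = sg v b"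
    and total_angle: "\<And>x b. site L d x \<Longrightarrow> x \<noteq> origin d \<Longrightarrow>
                       pi / 4 + sg x b * (real d * \<theta> / 2) = (if g x b then pi / 2 else 0)"
begin

lemma source_classical_at_gate:
  assumes "n < length es" "es ! n = (u, v)"
    and "qubit_amp (whip_angle L d \<theta> sg (take n es) u (\<sigma> (origin d))) (\<sigma> u) \<noteq> 0"
  shows "\<sigma> u = g u (\<sigma> (origin d))"
proof (cases "u = origin d")
  case False
  have "(u, v) \<in> edges L d"
    using order assms(1,2) nth_mem by (fastforce simp: gate_order_def)
  then have "whip_angle L d \<theta> sg (take n es) u b = (if g u b then pi / 2 else 0)" for b
    using whip_angle_all_incoming[OF gate_order_incoming_before[OF order assms(1,2)]]
      edge_source_site False total_angle by simp
  with assms(3) show ?thesis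
    by (simp add: qubit_amp_basis)
qed (simp add: g_origin)

lemma fold_gates_cond_product:
  "n \<le> length es \<Longrightarrow>
     fold (gate L d \<theta>) (take n es) (plus_state L d) = cond_product L d (whip_angle L d \<theta> sg (take n es))"
proof (induction n)
  case 0
  show ?case
    by (simp add: plus_state_eq_cond_product whip_angle_def)
next
  case (Suc n)
  then have n: "n < length es" by simp
  obtain u v where uv: "es ! n = (u, v)" by fastforce
  have edge: "(u, v) \<in> edges L d"
    using order n uv nth_mem by (fastforce simp: gate_order_def)
  have take_Suc_n: "take (Suc n) es = take n es @ [(u, v)]"
    using n uv by (simp add: take_Suc_conv_app_nth)
  have fresh: "(u, v) \<notin> set (take n es)"
    using order distinct_take[of es "Suc n"] by (simp add: gate_order_def take_Suc_n)
  then have angles: "whip_angle L d \<theta> sg (take (Suc n) es) = (whip_angle L d \<theta> sg (take n es))(v :=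
      \<lambda>b. whip_angle L d \<theta> sg (take n es) v b + zsign (g u b) * (real d / real (indeg L d v) * \<theta> / 2))"
    using whip_angle_snoc[OF fresh] source_sign[OF edge] by (simp add: take_Suc_n)
  have "gate L d \<theta> (u, v) (cond_product L d (whip_angle L d \<theta> sg (take n es)))
      = cond_product L d (whip_angle L d \<theta> sg (take (Suc n) es))"
    unfolding angles using source_classical_at_gate[OF n uv] edge
    by (intro gate_cond_product) (auto simp: edge_source_site edge_target_site edge_target_ne_origin
        edge_source_ne_target)
  then show ?case
    using Suc n take_Suc_n by simp
qed

lemma whip_eq_cond_product: "whip L d es \<theta> = cond_product L d (whip_angle L d \<theta> sg es)"
  using fold_gates_cond_product[of "length es"] by (simp add: whip_def)

lemma whip_angle_final:
  assumes "site L d x"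
  shows "whip_angle L d \<theta> sg es x b = (if x = origin d then pi / 4 else if g x b then pi / 2 else 0)"
proof (cases "x = origin d")
  case True
  then have "{e \<in> set es. snd e = x} = {}"
    using order edge_target_ne_origin by (fastforce simp: gate_order_def)
  with True show ?thesis
    by (simp add: whip_angle_def)
next
  case False
  have "{e \<in> set es. snd e = x} = {e \<in> edges L d. snd e = x}"
    using order by (simp add: gate_order_def)
  then show ?thesis
    using whip_angle_all_incoming[OF _ assms False] total_angle[OF assms False] False by simp
qed

lemma whip_apply:
  assumes "0 < L"
  shows "whip L d es \<theta> \<sigma> = (if config L d \<sigma> \<and> (\<forall>x\<in>{x. site L d x} - {origin d}. \<sigma> x = g x (\<sigma> (origin d)))
                              then of_real (1 / sqrt 2) else 0)"
proof (cases "config L d \<sigma>")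
  case True
  let ?S = "{x. site L d x} - {origin d}"
  have origin: "site L d (origin d)"
    using site_origin[OF assms] .
  have "(\<Prod>x\<in>?S. qubit_amp (whip_angle L d \<theta> sg es x (\<sigma> (origin d))) (\<sigma> x))
      = (\<Prod>x\<in>?S. of_bool (\<sigma> x = g x (\<sigma> (origin d))))"
    by (rule prod.cong) (auto simp: whip_angle_final qubit_amp_basis)
  also have "\<dots> = of_bool (\<forall>x\<in>?S. \<sigma> x = g x (\<sigma> (origin d)))"
    using finite_sites by (intro prod_of_bool) simp
  finally have "(\<Prod>x\<in>?S. qubit_amp (whip_angle L d \<theta> sg es x (\<sigma> (origin d))) (\<sigma> x))
      = of_bool (\<forall>x\<in>?S. \<sigma> x = g x (\<sigma> (origin d)))" .
  with True show ?thesis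
    unfolding whip_eq_cond_product cond_product_factor_site[OF True origin] whip_angle_final[OF origin]
    by simp
qed (simp add: whip_eq_cond_product cond_product_def)

lemma whip_eq_superpos:
  assumes "0 < L"
  shows "whip L d es \<theta> = superpos (ket (\<lambda>x. site L d x \<and> g x False)) (ket (\<lambda>x. site L d x \<and> g x True))"
  using whip_apply[OF assms] config_determined_by_origin_iff[where g = g, OF assms g_origin]
    branch_configs_distinct[where g = g, OF assms g_origin]
  by (simp add: superpos_ket_distinct fun_eq_iff)

end

definition ising_energy :: "nat \<Rightarrow> nat \<Rightarrow> real \<Rightarrow> (nat list \<Rightarrow> bool) \<Rightarrow> real" where
  "ising_energy L d J \<sigma> = (\<Sum>e\<in>edges L d. J * zsign (\<sigma> (fst e)) * zsign (\<sigma> (snd e)))"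

lemma pauliZ_eq_zsign: "pauliZ u \<psi> \<sigma> = of_real (zsign (\<sigma> u)) * \<psi> \<sigma>"
  by (simp add: pauliZ_def zsign_def)

lemma ham_apply: "ham L d J \<psi> \<sigma> = of_real (ising_energy L d J \<sigma>) * \<psi> \<sigma>"
  unfolding ham_def ising_energy_def pauliZ_eq_zsign of_real_sum sum_distrib_right
  by (simp add: mult.assoc)

lemma ising_energy_ge: "- \<bar>J\<bar> * real (card (edges L d)) \<le> ising_energy L d J \<sigma>"
proof -
  have "(\<Sum>e\<in>edges L d. - \<bar>J\<bar>) \<le> ising_energy L d J \<sigma>"
    unfolding ising_energy_def by (intro sum_mono) (simp add: zsign_def abs_if)
  then show ?thesis
    by (simp add: mult.commute)
qed

lemma eigenvalue_ge:
  assumes "eigenvalue L d J E"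
  shows "- \<bar>J\<bar> * real (card (edges L d)) \<le> E"
proof -
  obtain \<psi> where \<psi>: "\<psi> \<noteq> (\<lambda>_. 0)" "ham L d J \<psi> = (\<lambda>\<sigma>. of_real E * \<psi> \<sigma>)"
    using assms unfolding eigenvalue_def by blast
  then obtain \<sigma> where "\<psi> \<sigma> \<noteq> 0"
    by auto
  moreover have "of_real (ising_energy L d J \<sigma>) * \<psi> \<sigma> = of_real E * \<psi> \<sigma>"
    using fun_cong[OF \<psi>(2), of \<sigma>] by (simp add: ham_apply)
  ultimately have "ising_energy L d J \<sigma> = E"
    by simp
  then show ?thesis
    using ising_energy_ge by metis
qed

lemma ground_state_superpos_ket:
  assumes "A \<noteq> B" and "config L d A" "config L d B"
    and A_bonds: "\<And>u v. (u, v) \<in> edges L d \<Longrightarrow> J * zsign (A u) * zsign (A v) = - \<bar>J\<bar>"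
    and B_bonds: "\<And>u v. (u, v) \<in> edges L d \<Longrightarrow> J * zsign (B u) * zsign (B v) = - \<bar>J\<bar>"
  shows "ground_state L d J (superpos (ket A) (ket B)) (- \<bar>J\<bar> * real (card (edges L d)))"
proof -
  let ?E = "- \<bar>J\<bar> * real (card (edges L d))"
  let ?\<psi> = "superpos (ket A) (ket B)"
  have "ising_energy L d J A = ?E" "ising_energy L d J B = ?E"
    using A_bonds B_bonds by (auto simp: ising_energy_def mult.commute)
  then have "ham L d J ?\<psi> = (\<lambda>\<sigma>. of_real ?E * ?\<psi> \<sigma>)"
    using assms(1) by (auto simp: ham_apply superpos_ket_distinct)
  moreover have "supported L d ?\<psi>"
    using assms(1-3) by (simp add: supported_def superpos_ket_distinct)
  moreover have "?\<psi> \<noteq> (\<lambda>_. 0)"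
    using assms(1) by (auto simp: superpos_ket_distinct fun_eq_iff)
  ultimately show ?thesis
    unfolding ground_state_def using eigenvalue_ge by blast
qed

lemma stag_eq_odd_layer: "stag L d = (\<lambda>x. site L d x \<and> odd (layer x))"
  by (simp add: fun_eq_iff stag_def layer_def odd_iff_mod_2_eq_one)

lemma stag_bar_eq_even_layer: "stag_bar L d = (\<lambda>x. site L d x \<and> even (layer x))"
  by (simp add: fun_eq_iff stag_bar_def layer_def even_iff_mod_2_eq_zero)

lemma whip_eq_ghz:
  assumes "0 < d" "0 < L" "gate_order L d es"
  shows "whip L d es (- (pi / (2 * real d))) = superpos (ket all0) (ket (all1 L d))"
proof -
  have "whip L d es (- (pi / (2 * real d)))
      = superpos (ket (\<lambda>x. site L d x \<and> False)) (ket (\<lambda>x. site L d x \<and> True))"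
    by (rule whip_eq_superpos[where sg = "\<lambda>x b. zsign b", OF assms(3) _ _ _ assms(2)])
      (use assms(1) in \<open>simp_all add: zsign_def\<close>)
  then show ?thesis
    by (simp add: all0_def all1_def)
qed

lemma whip_eq_staggered:
  assumes "0 < d" "0 < L" "gate_order L d es"
  shows "whip L d es (pi / (2 * real d)) = superpos (ket (stag L d)) (ket (stag_bar L d))"
proof -
  have "whip L d es (pi / (2 * real d)) = superpos
      (ket (\<lambda>x. site L d x \<and> (False \<noteq> odd (layer x)))) (ket (\<lambda>x. site L d x \<and> (True \<noteq> odd (layer x))))"
    by (rule whip_eq_superpos[where sg = "\<lambda>x b. zsign (b = odd (layer x))", OF assms(3) _ _ _ assms(2)])
      (use assms(1) layer_edge_target in \<open>simp_all add: zsign_def\<close>)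
  then show ?thesis
    by (simp add: stag_eq_odd_layer stag_bar_eq_even_layer)
qed

lemma ground_state_ghz:
  assumes "0 < L"
  shows "ground_state L d (-1) (superpos (ket all0) (ket (all1 L d))) (- real (card (edges L d)))"
proof -
  have "all0 \<noteq> all1 L d"
    using site_origin[OF assms, of d] by (auto simp: all0_def all1_def fun_eq_iff)
  then have "ground_state L d (-1) (superpos (ket all0) (ket (all1 L d))) (- \<bar>-1\<bar> * real (card (edges L d)))"
    by (rule ground_state_superpos_ket)
      (auto simp: config_def all0_def all1_def zsign_def dest: edge_source_site edge_target_site)
  then show ?thesis
    by simp
qed

lemma ground_state_staggered:
  assumes "0 < L"
  shows "ground_state L d 1 (superpos (ket (stag L d)) (ket (stag_bar L d))) (- real (card (edges L d)))"
proof -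
  have "stag L d \<noteq> stag_bar L d"
    using site_origin[OF assms, of d] by (auto simp: stag_eq_odd_layer stag_bar_eq_even_layer fun_eq_iff)
  then have "ground_state L d 1 (superpos (ket (stag L d)) (ket (stag_bar L d))) (- \<bar>1\<bar> * real (card (edges L d)))"
    unfolding stag_eq_odd_layer stag_bar_eq_even_layer
    by (rule ground_state_superpos_ket)
      (auto simp: config_def zsign_def dest: edge_source_site edge_target_site layer_edge_target)
  then show ?thesis
    by simp
qed

theorem mainTheorem1:
  fixes d L :: nat and es :: "(nat list \<times> nat list) list"
  assumes "d \<ge> 1" and "L \<ge> 2" and "gate_order L d es"
  shows "whip L d es (- (pi / (2 * real d))) = superpos (ket all0) (ket (all1 L d))
       \<and> whip L d es (pi / (2 * real d)) = superpos (ket (stag L d)) (ket (stag_bar L d))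
       \<and> ground_state L d (-1) (whip L d es (- (pi / (2 * real d))))
           (- (real d * (real L - 1) * real L ^ (d - 1)))
       \<and> ground_state L d 1 (whip L d es (pi / (2 * real d)))
           (- (real d * (real L - 1) * real L ^ (d - 1)))"
proof -
  have d: "0 < d" and L: "0 < L"
    using assms(1,2) by auto
  have energy: "- real (card (edges L d)) = - (real d * (real L - 1) * real L ^ (d - 1))"
    using L by (simp add: card_edges)
  show ?thesis
    unfolding energy[symmetric]
    using whip_eq_ghz[OF d L assms(3)] whip_eq_staggered[OF d L assms(3)]
      ground_state_ghz[OF L] ground_state_staggered[OF L]
    by simp
qed

end
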